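(* Let $f:\mathbb{R}^n\to\mathbb{R}$ be convex and $L$-smooth ($L>0$), $h$ proper closed convex with $\mathrm{dom}\, h\subset\mathrm{dom}\, f$, $\phi=f+h$, $\lambda>0$ and $x_0\in\mathbb{R}^n$. Run the ACG method (see context) with this $x_0$, $g=f+\frac1{2\lambda}\|\cdot-x_0\|^2$, $\mu=1/\lambda$ and $\psi=\phi+\frac1{2\lambda}\|\cdot-x_0\|^2$, and for $j\ge1$ define $\hat v_j=\frac{x_0-x_j}{A_j}+\frac{x_0-x_j}{\lambda}$ and $\varepsilon_j=\phi(y_j)-\phi_j(x_j)-\langle\hat v_j,y_j-x_j\rangle$, where $\phi_j=\Gamma_j-\frac{1}{2\lambda}\|\cdot-x_0\|^2$. Then the number of ACG iterations needed to find a triple $(\tilde w,u,\eta)=(y_j,\hat v_j,\varepsilon_j)$ satisfying $$u\in\partial_\eta\phi(\tilde w),\qquad \|\lambda u+\tilde w-x_0\|^2+2\lambda\eta\le 0.9\|x_0-\tilde w\|^2$$ is at most $\min\left\{2\sqrt{6\lambda L},\ \left(\tfrac12+\sqrt{\lambda L}\right)\ln(6\lambda L)\right\}$.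
   Context: $\partial_\varepsilon\phi(x)=\{s:\phi(y)\ge\phi(x)+\langle s,y-x\rangle-\varepsilon\ \forall y\}$; $\ell_g(u;x)=g(x)+\langle\nabla g(x),u-x\rangle$. ACG method for $\min\psi=g+h$ ($g$ $\mu$-strongly convex, $(L+\mu)$-smooth): $A_0=0$, $\tau_0=1/L$, $y_0=x_0$; for $j\ge0$: $a_j=\frac{\tau_j+\sqrt{\tau_j^2+4\tau_jA_j}}{2}$, $\tau_{j+1}=\tau_j+\mu a_j/L$, $A_{j+1}=A_j+a_j$, $\tilde x_j=\frac{A_j}{A_{j+1}}y_j+\frac{a_j}{A_{j+1}}x_j$; $\tilde y_{j+1}=\mathrm{argmin}_u\{\ell_g(u;\tilde x_j)+h(u)+\frac{L+\mu}{2}\|u-\tilde x_j\|^2\}$; $y_{j+1}\in\mathrm{Argmin}\{\psi(u):u\in\{y_j,\tilde y_{j+1}\}\}$; $x_{j+1}=\frac{(L+\mu)a_j\tilde y_{j+1}-\frac{A_ja_jL}{A_{j+1}}y_j}{A_{j+1}\mu+1}$. Further $\tilde\gamma_j(u)=\ell_g(u;\tilde x_j)+h(u)+\frac\mu2\|u-\tilde x_j\|^2$, $\gamma_j(u)=\tilde\gamma_j(\tilde y_{j+1})+L\langle\tilde x_j-\tilde y_{j+1},u-\tilde y_{j+1}\rangle+\frac\mu2\|u-\tilde y_{j+1}\|^2$, $\Gamma_0\equiv0$, $\Gamma_{j+1}=(A_j\Gamma_j+a_j\gamma_j)/A_{j+1}$. *)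

theory Defs
  imports "HOL-Analysis.Analysis"
begin

definition ereal_epigraph :: "('a \<Rightarrow> ereal) \<Rightarrow> ('a \<times> real) set" where
  "ereal_epigraph h = {(x, t). h x \<le> ereal t}"

definition proper_closed_convex :: "('a::real_normed_vector \<Rightarrow> ereal) \<Rightarrow> bool" where
  "proper_closed_convex h \<longleftrightarrow>
     (\<forall>x. h x \<noteq> -\<infinity>) \<and> (\<exists>x. h x \<noteq> \<infinity>) \<and>
     convex (ereal_epigraph h) \<and> closed (ereal_epigraph h)"

definition L_smooth :: "real \<Rightarrow> ('a::real_inner \<Rightarrow> real) \<Rightarrow> ('a \<Rightarrow> 'a) \<Rightarrow> bool" where
  "L_smooth L f df \<longleftrightarrow>
     (\<forall>x. (f has_derivative (\<lambda>d. inner (df x) d)) (at x)) \<and>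
     (\<forall>x y. norm (df x - df y) \<le> L * norm (x - y))"

definition eps_subdiff :: "('a::real_inner \<Rightarrow> ereal) \<Rightarrow> real \<Rightarrow> 'a \<Rightarrow> 'a set" where
  "eps_subdiff phi eps x = {s. \<forall>y. phi y \<ge> phi x + ereal (inner s (y - x) - eps)}"

definition lin_approx :: "('a::real_inner \<Rightarrow> real) \<Rightarrow> ('a \<Rightarrow> 'a) \<Rightarrow> 'a \<Rightarrow> 'a \<Rightarrow> real" where
  "lin_approx g dg z u = g z + inner (dg z) (u - z)"

text \<open>
  Indexing: xt j = tilde x_j,
  yt (Suc j) = tilde y_(j+1) (yt 0 is unused), Gam j = Gamma_j.
  Since h is extended-valued, h(tilde y_(j+1)) (finite, being the value at a minimiser of a proper
  function) enters Gamma via real_of_ereal.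
\<close>
definition ACG_run ::
  "real \<Rightarrow> real \<Rightarrow> ('a::real_inner \<Rightarrow> real) \<Rightarrow> ('a \<Rightarrow> 'a) \<Rightarrow> ('a \<Rightarrow> ereal) \<Rightarrow> 'a \<Rightarrow>
   (nat \<Rightarrow> real) \<Rightarrow> (nat \<Rightarrow> real) \<Rightarrow> (nat \<Rightarrow> real) \<Rightarrow>
   (nat \<Rightarrow> 'a) \<Rightarrow> (nat \<Rightarrow> 'a) \<Rightarrow> (nat \<Rightarrow> 'a) \<Rightarrow> (nat \<Rightarrow> 'a) \<Rightarrow> (nat \<Rightarrow> 'a \<Rightarrow> real) \<Rightarrow> bool"
where
  "ACG_run L mu g dg h x0 A tau a x y xt yt Gam \<longleftrightarrow>
     A 0 = 0 \<and> tau 0 = 1 / L \<and> y 0 = x0 \<and> x 0 = x0 \<and> Gam 0 = (\<lambda>u. 0) \<and>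
     (\<forall>j. a j = (tau j + sqrt ((tau j)\<^sup>2 + 4 * tau j * A j)) / 2 \<and>
          tau (Suc j) = tau j + mu * a j / L \<and>
          A (Suc j) = A j + a j \<and>
          xt j = (A j / A (Suc j)) *\<^sub>R y j + (a j / A (Suc j)) *\<^sub>R x j \<and>
          (\<forall>u. ereal (lin_approx g dg (xt j) (yt (Suc j))) + h (yt (Suc j))
                  + ereal ((L + mu) / 2 * (norm (yt (Suc j) - xt j))\<^sup>2)
                \<le> ereal (lin_approx g dg (xt j) u) + h u
                  + ereal ((L + mu) / 2 * (norm (u - xt j))\<^sup>2)) \<and>
          y (Suc j) \<in> {y j, yt (Suc j)} \<and>
          ereal (g (y (Suc j))) + h (y (Suc j)) \<le> ereal (g (y j)) + h (y j) \<and>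
          ereal (g (y (Suc j))) + h (y (Suc j)) \<le> ereal (g (yt (Suc j))) + h (yt (Suc j)) \<and>
          x (Suc j) = (1 / (A (Suc j) * mu + 1)) *\<^sub>R
                        (((L + mu) * a j) *\<^sub>R yt (Suc j) - (A j * a j * L / A (Suc j)) *\<^sub>R y j) \<and>
          Gam (Suc j) = (\<lambda>u. (A j * Gam j u
              + a j * ( (lin_approx g dg (xt j) (yt (Suc j)) + real_of_ereal (h (yt (Suc j)))
                         + mu / 2 * (norm (yt (Suc j) - xt j))\<^sup>2)
                       + L * inner (xt j - yt (Suc j)) (u - yt (Suc j))
                       + mu / 2 * (norm (u - yt (Suc j)))\<^sup>2)) / A (Suc j)))"

end

theory Submission
  imports Defs
begin

(*
  The lower models gam j built by the ACG method (a proximal step for h combined with the strong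
  convexity of g) lie below psi = phi + |. - x0|^2/(2 lam), hence so does their weighted average
  Gam j.  By induction, A j * Gam j is a quadratic of curvature A j / lam whose gradient at x j is
  x0 - x j, so x j minimises A j * Gam j + |. - x0|^2/2, and the usual ACG estimate propagates
  A j * psi (y j) <= min (A j * Gam j + |. - x0|^2/2).  The first fact makes Gam j - |. - x0|^2/(2 lam)
  an affine minorant of phi with slope v_hat j, which is the eps-subgradient statement; the second
  bounds eps j by the distances between x0, x j and y j, and this gives the relative error
  criterion as soon as lam / A j <= 0.31.  Finally A j * L grows like j^2/4 and like
  (1 + 1/sqrt(lam L) + 1/(2 lam L))^(j-1), which yields the iteration bound; when lam L <= 1/2
  already j = 1 works, because y 1 is x0 or x 1.
*)

subsection \<open>Convex analysis\<close>

lemma has_real_derivative_along_line: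
  fixes f :: "'a::real_inner \<Rightarrow> real"
  assumes "\<And>x. (f has_derivative (\<lambda>d. inner (df x) d)) (at x)"
  shows "((\<lambda>t. f (x + t *\<^sub>R d)) has_real_derivative inner (df (x + t *\<^sub>R d)) d) (at t within S)"
proof -
  have "((\<lambda>t. x + t *\<^sub>R d) has_derivative (\<lambda>s. s *\<^sub>R d)) (at t within S)"
    by (auto intro!: derivative_eq_intros)
  then have "((\<lambda>t. f (x + t *\<^sub>R d))
      has_derivative (\<lambda>s. inner (df (x + t *\<^sub>R d)) (s *\<^sub>R d))) (at t within S)"
    using has_derivative_compose assms by blast
  then show ?thesis
    by (rule has_derivative_imp_has_field_derivative) simp
qed

lemma convex_on_gradient_inequality:
  fixes f :: "'a::real_inner \<Rightarrow> real"
  assumes cvx: "convex_on UNIV f" and der: "\<And>x. (f has_derivative (\<lambda>d. inner (df x) d)) (at x)"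
  shows "f x + inner (df x) (y - x) \<le> f y"
proof -
  define p where "p = (\<lambda>t::real. f (x + t *\<^sub>R (y - x)))"
  have "convex_on UNIV p"
  proof (rule convex_onI)
    fix t a b :: real assume "0 < t" "t < 1"
    have "x + ((1 - t) *\<^sub>R a + t *\<^sub>R b) *\<^sub>R (y - x)
        = (1 - t) *\<^sub>R (x + a *\<^sub>R (y - x)) + t *\<^sub>R (x + b *\<^sub>R (y - x))"
      by (simp add: algebra_simps)
    then show "p ((1 - t) *\<^sub>R a + t *\<^sub>R b) \<le> (1 - t) * p a + t * p b"
      unfolding p_def using convex_onD[OF cvx, of t] \<open>0 < t\<close> \<open>t < 1\<close> by simp
  qed simp
  moreover have "(p has_real_derivative inner (df x) (y - x)) (at 0 within UNIV)"
    unfolding p_def using has_real_derivative_along_line[OF der, of x "y - x" 0 UNIV] by simp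
  ultimately have "p 1 - p 0 \<ge> inner (df x) (y - x) * (1 - 0)"
    by (intro convex_on_imp_above_tangent) auto
  then show ?thesis unfolding p_def by simp
qed

lemma L_smooth_quadratic_upper_bound:
  fixes f :: "'a::real_inner \<Rightarrow> real"
  assumes "L_smooth L f df"
  shows "f y \<le> f x + inner (df x) (y - x) + L / 2 * (norm (y - x))\<^sup>2"
proof -
  define d where "d = y - x"
  define p where "p = (\<lambda>t::real. f (x + t *\<^sub>R d) - t * inner (df x) d - L / 2 * t\<^sup>2 * (norm d)\<^sup>2)"
  have der: "\<And>x. (f has_derivative (\<lambda>d. inner (df x) d)) (at x)"
   and lip: "\<And>x y. norm (df x - df y) \<le> L * norm (x - y)"
    using assms unfolding L_smooth_def by auto
  have "p 1 \<le> p 0"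
  proof (rule DERIV_nonpos_imp_nonincreasing[of 0 1 p])
    fix t :: real assume t: "0 \<le> t" "t \<le> 1"
    have D: "DERIV p t :> inner (df (x + t *\<^sub>R d)) d - inner (df x) d - L / 2 * (2 * t) * (norm d)\<^sup>2"
      unfolding p_def by (auto intro!: derivative_eq_intros has_real_derivative_along_line[OF der])
    have "inner (df (x + t *\<^sub>R d)) d - inner (df x) d = inner (df (x + t *\<^sub>R d) - df x) d"
      by (simp add: inner_diff_left)
    also have "\<dots> \<le> norm (df (x + t *\<^sub>R d) - df x) * norm d"
      by (rule norm_cauchy_schwarz)
    also have "\<dots> \<le> (L * norm (t *\<^sub>R d)) * norm d"
      using lip[of "x + t *\<^sub>R d" x] by (intro mult_right_mono) auto
    also have "\<dots> = L * t * (norm d)\<^sup>2"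
      using t by (simp add: power2_eq_square)
    finally show "\<exists>y. DERIV p t :> y \<and> y \<le> 0"
      using D by auto
  qed simp
  then show ?thesis unfolding p_def d_def by simp
qed

lemma power2_norm_add:
  fixes a b :: "'a::real_inner"
  shows "(norm (a + b))\<^sup>2 = (norm a)\<^sup>2 + 2 * inner a b + (norm b)\<^sup>2"
  by (simp add: power2_norm_eq_inner inner_add_left inner_add_right inner_commute)

lemma power2_norm_diff:
  fixes a b :: "'a::real_inner"
  shows "(norm (a - b))\<^sup>2 = (norm a)\<^sup>2 - 2 * inner a b + (norm b)\<^sup>2"
  by (simp add: power2_norm_eq_inner inner_diff_left inner_diff_right inner_commute)

lemma convex_on_power2_norm_diff: "convex_on UNIV (\<lambda>x::'a::real_inner. (norm (x - c))\<^sup>2)"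
proof (rule convex_onI)
  fix t :: real and x y :: 'a
  assume t: "0 < t" "t < 1"
  define p q where "p = x - c" and "q = y - c"
  have eq: "(1 - t) *\<^sub>R x + t *\<^sub>R y - c = (1 - t) *\<^sub>R p + t *\<^sub>R q"
    unfolding p_def q_def by (simp add: algebra_simps)
  have "(1 - t) * (norm p)\<^sup>2 + t * (norm q)\<^sup>2 - (norm ((1 - t) *\<^sub>R p + t *\<^sub>R q))\<^sup>2
      = t * (1 - t) * (norm (p - q))\<^sup>2"
    by (simp add: power2_norm_eq_inner inner_add_left inner_add_right inner_diff_left
        inner_diff_right inner_commute algebra_simps)
  moreover have "0 \<le> t * (1 - t) * (norm (p - q))\<^sup>2"
    using t by simp
  ultimately show "(norm ((1 - t) *\<^sub>R x + t *\<^sub>R y - c))\<^sup>2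
      \<le> (1 - t) * (norm (x - c))\<^sup>2 + t * (norm (y - c))\<^sup>2"
    unfolding eq p_def[symmetric] q_def[symmetric] by linarith
qed simp

lemma quadratic_recenter:
  fixes F :: "'a::real_inner \<Rightarrow> real"
  assumes F: "\<And>u. F u = F x + inner p (u - x) + K / 2 * (norm (u - x))\<^sup>2"
  shows "F u = F x' + inner (p + K *\<^sub>R (x' - x)) (u - x') + K / 2 * (norm (u - x'))\<^sup>2"
proof -
  have split: "\<And>n1 i n2 :: real. K / 2 * (n1 + 2 * i + n2) = K / 2 * n1 + K * i + K / 2 * n2"
    by (simp add: field_simps)
  have "(x' - x) + (u - x') = u - x"
    by simp
  then have n: "(norm (u - x))\<^sup>2 = (norm (x' - x))\<^sup>2 + 2 * inner (x' - x) (u - x') + (norm (u - x'))\<^sup>2"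
    using power2_norm_add[of "x' - x" "u - x'"] by simp
  have "K / 2 * (norm (u - x))\<^sup>2
      = K / 2 * (norm (x' - x))\<^sup>2 + K * inner (x' - x) (u - x') + K / 2 * (norm (u - x'))\<^sup>2"
    unfolding n by (rule split)
  moreover have "inner (p + K *\<^sub>R (x' - x)) (u - x') = inner p (u - x') + K * inner (x' - x) (u - x')"
    by (simp add: inner_add_left)
  moreover have "inner p (u - x) = inner p (u - x') + inner p (x' - x)"
    by (simp add: inner_diff_right)
  ultimately show ?thesis
    using F[of u] F[of x'] by linarith
qed

lemma first_order_coeff_nonneg:
  fixes D M :: real
  assumes "\<And>t. 0 < t \<Longrightarrow> t \<le> 1 \<Longrightarrow> 0 \<le> t * D + t\<^sup>2 * M"
  shows "0 \<le> D"
proof (rule ccontr)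
  assume "\<not> 0 \<le> D"
  define t where "t = min 1 (- D / (2 * \<bar>M\<bar> + 1))"
  have "0 < - D / (2 * \<bar>M\<bar> + 1)"
    using \<open>\<not> 0 \<le> D\<close> by (intro divide_pos_pos) auto
  then have t: "0 < t" "t \<le> 1"
    unfolding t_def by auto
  have "t \<le> - D / (2 * \<bar>M\<bar> + 1)"
    unfolding t_def by simp
  then have "t * (2 * \<bar>M\<bar> + 1) \<le> - D"
    by (subst (asm) pos_le_divide_eq) auto
  moreover have "t * M \<le> t * \<bar>M\<bar>"
    using t by (intro mult_left_mono) auto
  moreover have "t * \<bar>M\<bar> < t * (2 * \<bar>M\<bar> + 1)"
    using t by (intro mult_strict_left_mono) auto
  ultimately have "t * M < - D"
    by linarith
  then have "t * (D + t * M) < 0"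
    using t by (simp add: mult_pos_neg)
  with assms[OF t] show False
    by (simp add: power2_eq_square algebra_simps)
qed

lemma ereal_epigraph_convexD:
  assumes "convex (ereal_epigraph h)" "h y = ereal hy" "h u = ereal hu" "0 \<le> t" "t \<le> 1"
  shows "h ((1 - t) *\<^sub>R y + t *\<^sub>R u) \<le> ereal ((1 - t) * hy + t * hu)"
proof -
  have "(y, hy) \<in> ereal_epigraph h" "(u, hu) \<in> ereal_epigraph h"
    using assms(2,3) unfolding ereal_epigraph_def by auto
  then have "(1 - t) *\<^sub>R (y, hy) + t *\<^sub>R (u, hu) \<in> ereal_epigraph h"
    using convexD[OF assms(1), of "(y, hy)" "(u, hu)" "1 - t" t] assms(4,5) by simp
  then show ?thesis unfolding ereal_epigraph_def by simp
qed

text \<open>The conclusion says that \<open>-(p + K *\<^sub>R (y - z))\<close> is a subgradient of \<open>h\<close> at \<open>y\<close>.\<close>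
lemma prox_variational_inequality:
  fixes h :: "'a::real_inner \<Rightarrow> ereal"
  assumes cvx: "convex (ereal_epigraph h)" and not_minf: "\<And>x. h x \<noteq> -\<infinity>" and fin: "h y \<noteq> \<infinity>"
    and opt: "\<And>u. ereal (c + inner p (y - z)) + h y + ereal (K / 2 * (norm (y - z))\<^sup>2)
                 \<le> ereal (c + inner p (u - z)) + h u + ereal (K / 2 * (norm (u - z))\<^sup>2)"
  shows "h y + ereal (inner p (y - u) + K * inner (z - y) (u - y)) \<le> h u"
proof (cases "h u = \<infinity>")
  case False
  obtain hu where hu: "h u = ereal hu" using False not_minf by (cases "h u") auto
  obtain hy where hy: "h y = ereal hy" using fin not_minf by (cases "h y") auto
  define D where "D = inner p (u - y) + hu - hy + K * inner (y - z) (u - y)"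
  have "0 \<le> t * D + t\<^sup>2 * (K / 2 * (norm (u - y))\<^sup>2)" if t: "0 < t" "t \<le> 1" for t
  proof -
    define w where "w = (1 - t) *\<^sub>R y + t *\<^sub>R u"
    have "h w \<le> ereal ((1 - t) * hy + t * hu)"
      unfolding w_def using ereal_epigraph_convexD[OF cvx hy hu] t by simp
    moreover obtain hw where hw: "h w = ereal hw"
      using calculation not_minf by (cases "h w") auto
    ultimately have hw_le: "hw \<le> (1 - t) * hy + t * hu" by simp
    have wz: "w - z = (y - z) + t *\<^sub>R (u - y)"
      unfolding w_def by (simp add: algebra_simps)
    have "c + inner p (y - z) + K / 2 * (norm (y - z))\<^sup>2 + hy
        \<le> c + inner p (w - z) + K / 2 * (norm (w - z))\<^sup>2 + hw"
      using opt[of w] hy hw by simp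
    moreover have "(norm (w - z))\<^sup>2 = (norm (y - z))\<^sup>2 + 2 * t * inner (y - z) (u - y) + t\<^sup>2 * (norm (u - y))\<^sup>2"
      unfolding wz power2_norm_add by (simp add: power2_eq_square)
    moreover have "inner p (w - z) = inner p (y - z) + t * inner p (u - y)"
      unfolding wz by (simp add: inner_add_right)
    ultimately show ?thesis
      using hw_le unfolding D_def by (simp add: algebra_simps)
  qed
  then have "0 \<le> D"
    by (rule first_order_coeff_nonneg)
  then have "inner p (y - u) + K * inner (z - y) (u - y) \<le> hu - hy"
    unfolding D_def by (simp add: inner_diff_left inner_diff_right algebra_simps)
  then show ?thesis
    using hu hy by simp
qed simp

subsection \<open>Elementary estimates\<close>

lemma ln_add_one_ge:
  fixes x :: real
  assumes "0 \<le> x"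
  shows "2 * x / (2 + x) \<le> ln (1 + x)"
proof -
  define F where "F = (\<lambda>t::real. ln (1 + t) - 2 * t / (2 + t))"
  have "F 0 \<le> F x"
  proof (rule DERIV_nonneg_imp_nondecreasing[OF assms])
    fix t :: real assume t: "0 \<le> t" "t \<le> x"
    have "DERIV F t :> 1 / (1 + t) - (2 * (2 + t) - 2 * t) / (2 + t)\<^sup>2"
      unfolding F_def using t
      by (auto intro!: derivative_eq_intros simp: power2_eq_square field_simps)
    then have D: "DERIV F t :> 1 / (1 + t) - 4 / (2 + t)\<^sup>2"
      by simp
    have "4 * (1 + t) \<le> (2 + t)\<^sup>2"
      using zero_le_square[of t] by (simp add: power2_eq_square algebra_simps)
    moreover have "0 < (2 + t)\<^sup>2 * (4 * (1 + t))"
      using t by (intro mult_pos_pos) auto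
    ultimately have "4 / (2 + t)\<^sup>2 \<le> 4 / (4 * (1 + t))"
      by (intro divide_left_mono) auto
    also have "\<dots> = 1 / (1 + t)"
      by (metis mult_divide_mult_cancel_left_if zero_neq_numeral mult_1_right)
    finally have "0 \<le> 1 / (1 + t) - 4 / (2 + t)\<^sup>2"
      by simp
    with D show "\<exists>y. DERIV F t :> y \<and> 0 \<le> y"
      by blast
  qed
  then show ?thesis unfolding F_def by simp
qed

lemma ln_growth_factor_bounds:
  fixes w :: real
  assumes w: "0.7 \<le> w"
  shows "2 / (2 * w + 1) \<le> ln (1 + 1 / w + 1 / (2 * w\<^sup>2))"
    and "4 / (2 * w + 1) - ln (1 + 1 / w + 1 / (2 * w\<^sup>2)) \<le> 0.6"
proof -
  define B where "B = 2 * w + 1"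
  define D where "D = 4 * w\<^sup>2 + 2 * w + 1"
  have B: "0 < B" and D: "0 < D" and w2: "0 < 2 * w\<^sup>2"
    unfolding B_def D_def using w by (simp_all add: add_pos_pos)
  have "2 + B / (2 * w\<^sup>2) = D / (2 * w\<^sup>2)"
    unfolding B_def D_def using w2 by (simp add: field_simps)
  then have "2 * B / D = 2 * (B / (2 * w\<^sup>2)) / (2 + B / (2 * w\<^sup>2))"
    using w2 D by (simp add: field_simps)
  also have "\<dots> \<le> ln (1 + B / (2 * w\<^sup>2))"
    using B w2 by (intro ln_add_one_ge) simp
  also have "1 + B / (2 * w\<^sup>2) = 1 + 1 / w + 1 / (2 * w\<^sup>2)"
    unfolding B_def using w by (simp add: field_simps power2_eq_square)
  finally have ln_ge: "2 * B / D \<le> ln (1 + 1 / w + 1 / (2 * w\<^sup>2))" .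
  have "D \<le> B\<^sup>2"
    unfolding D_def B_def using w by (simp add: power2_eq_square algebra_simps)
  then have "2 * B / B\<^sup>2 \<le> 2 * B / D"
    using B D by (intro divide_left_mono) auto
  moreover have "2 * B / B\<^sup>2 = 2 / (2 * w + 1)"
    unfolding B_def[symmetric] using B by (simp add: power2_eq_square)
  ultimately show "2 / (2 * w + 1) \<le> ln (1 + 1 / w + 1 / (2 * w\<^sup>2))"
    using ln_ge by linarith
  have "0.7 * w\<^sup>2 \<le> w * w\<^sup>2"
    using w by (intro mult_right_mono) auto
  moreover have "4 * D - 2 * B * B = 8 * w\<^sup>2 + 2"
    and "B * D = 8 * (w * w\<^sup>2) + 8 * w\<^sup>2 + 4 * w + 1"
    unfolding B_def D_def by (simp_all add: power2_eq_square algebra_simps)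
  ultimately have "4 * D - 2 * B * B \<le> 0.6 * (B * D)"
    using w zero_le_power2[of w] by linarith
  then have "(4 * D - 2 * B * B) / (B * D) \<le> 0.6"
    using B D by (simp add: pos_divide_le_eq)
  moreover have "(4 * D - 2 * B * B) / (B * D) = 4 / (2 * w + 1) - 2 * B / D"
    unfolding B_def[symmetric] using B D by (simp add: field_simps)
  ultimately show "4 / (2 * w + 1) - ln (1 + 1 / w + 1 / (2 * w\<^sup>2)) \<le> 0.6"
    using ln_ge by linarith
qed

lemma growth_factor_power_ge:
  fixes w :: real and J :: nat
  assumes w: "0.7 \<le> w" and J: "2 \<le> J" and JB: "(1 / 2 + w) * ln (6 * w\<^sup>2) \<le> real J"
  shows "w\<^sup>2 / 0.31 \<le> (1 + 1 / w + 1 / (2 * w\<^sup>2)) ^ (J - 1)"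
proof -
  define p where "p = 1 + 1 / w + 1 / (2 * w\<^sup>2)"
  define t where "t = 2 / (2 * w + 1)"
  have p: "0 < p" unfolding p_def using w by (simp add: add_pos_pos)
  have t_le: "t \<le> ln p" and t2_le: "2 * t - ln p \<le> 0.6"
    using ln_growth_factor_bounds[OF w] unfolding p_def t_def by simp_all
  have "ln (6 * w\<^sup>2) \<le> t * real J"
    using JB w by (simp add: t_def field_simps)
  moreover have "ln (6 * w\<^sup>2) = ln 1.86 + ln (w\<^sup>2 / 0.31)"
    using w by (subst ln_mult_pos[symmetric]) auto
  moreover have "0.6 \<le> ln (1.86 :: real)"
    using ln_add_one_ge[of "0.86"] by simp
  moreover have "(real J - 1) * ln p - t * real J = (real J - 2) * (ln p - t) + (ln p - 2 * t)"
    by (simp add: algebra_simps)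
  moreover have "0 \<le> (real J - 2) * (ln p - t)"
    using J t_le by simp
  ultimately have "ln (w\<^sup>2 / 0.31) \<le> (real J - 1) * ln p"
    using t2_le by linarith
  also have "\<dots> = ln (p ^ (J - 1))"
    using p J by (simp add: ln_realpow of_nat_diff)
  finally show ?thesis
    unfolding p_def[symmetric] using p w by (subst (asm) ln_le_cancel_iff) auto
qed

lemma iteration_bound_gt_one:
  fixes r :: real
  assumes r: "1 / 2 < r"
  shows "1 < min (2 * sqrt (6 * r)) ((1 / 2 + sqrt r) * ln (6 * r))"
proof -
  have "1 < sqrt (6 * r)"
    using r by simp
  moreover have "1 < ln (6 * r)"
  proof -
    have "1 \<le> ln (3 :: real)"
      using ln_le_cancel_iff[of "exp 1" 3] exp_le by simp
    also have "ln 3 < ln (6 * r)"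
      using r by simp
    finally show ?thesis .
  qed
  moreover have "1 < 1 / 2 + sqrt r"
  proof -
    have "sqrt (1 / 4) < sqrt r"
      using r by (intro real_sqrt_less_mono) simp
    then show ?thesis by (simp add: real_sqrt_divide)
  qed
  ultimately have "1 * 1 < (1 / 2 + sqrt r) * ln (6 * r)"
    by (intro mult_strict_mono) auto
  moreover have "1 < 2 * sqrt (6 * r)"
    using \<open>1 < sqrt (6 * r)\<close> by linarith
  ultimately show ?thesis
    by simp
qed

lemma power2_norm_le_young:
  fixes a b :: "'a::real_inner"
  shows "(norm a)\<^sup>2 \<le> 1.5 * (norm (a - b))\<^sup>2 + 3 * (norm b)\<^sup>2"
proof -
  have "(norm (a - 3 *\<^sub>R b))\<^sup>2 = (norm a)\<^sup>2 - 6 * inner a b + 9 * (norm b)\<^sup>2"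
    unfolding power2_norm_diff by (simp add: power_mult_distrib)
  then have "0 \<le> (norm a)\<^sup>2 - 6 * inner a b + 9 * (norm b)\<^sup>2"
    by (metis zero_le_power2)
  then show ?thesis
    unfolding power2_norm_diff by (simp add: field_simps)
qed

lemma relative_error_bound:
  fixes a b :: "'a::real_inner"
  assumes s: "0 < s" and E: "0 \<le> E" "E \<le> s * (norm a)\<^sup>2 - 2 * s * inner a b - (norm b)\<^sup>2"
    and small: "s \<le> 0.31 \<or> (s \<le> 1 / 2 \<and> (b = 0 \<or> a = b))"
  shows "(norm (s *\<^sub>R a + b))\<^sup>2 + E \<le> 0.9 * (norm (a - b))\<^sup>2"
proof -
  define na nb nc where "na = (norm a)\<^sup>2" and "nb = (norm b)\<^sup>2" and "nc = (norm (a - b))\<^sup>2"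
  have nc_eq: "nc = na - 2 * inner a b + nb"
    unfolding na_def nb_def nc_def by (rule power2_norm_diff)
  have lhs: "(norm (s *\<^sub>R a + b))\<^sup>2 + E \<le> s * (1 + s) * na"
    using E(2) unfolding power2_norm_add na_def
    by (simp add: power_mult_distrib power2_eq_square algebra_simps)
  have nb_le: "(1 + s) * nb \<le> s * nc"
    using E unfolding nc_eq na_def nb_def by (simp add: algebra_simps)
  from small show ?thesis
  proof (elim disjE conjE)
    assume s_le: "s \<le> 0.31"
    have "s * (1 + s) * na \<le> s * (1 + s) * (1.5 * nc + 3 * nb)"
      using power2_norm_le_young[of a b] s unfolding na_def nb_def nc_def by (intro mult_left_mono) auto
    also have "\<dots> \<le> (1.5 + 4.5 * s) * s * nc"
      using mult_left_mono[OF nb_le, of "3 * s"] s by (simp add: field_simps)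
    also have "\<dots> \<le> 0.9 * nc"
    proof -
      have "(1.5 + 4.5 * s) * s \<le> (1.5 + 4.5 * 0.31) * 0.31"
        using s s_le by (intro mult_mono) auto
      then show ?thesis
        unfolding nc_def by (intro mult_right_mono) auto
    qed
    finally show ?thesis
      using lhs unfolding nc_def by linarith
  next
    assume "s \<le> 1 / 2" "b = 0"
    then have "s * (1 + s) \<le> 1 / 2 * (3 / 2)"
      using s by (intro mult_mono) auto
    then have "s * (1 + s) * nc \<le> 0.9 * nc"
      by (intro mult_right_mono) (auto simp: nc_def)
    then show ?thesis
      using lhs \<open>b = 0\<close> unfolding na_def nc_def by simp
  next
    assume "a = b"
    then have "(1 + s) * nb \<le> 0"
      using nb_le unfolding nc_def by simp
    then have "nb \<le> 0"
      using s by (simp add: mult_le_0_iff)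
    then show ?thesis
      using lhs \<open>a = b\<close> unfolding na_def nb_def by simp
  qed
qed

subsection \<open>The ACG run for the proximal subproblem\<close>

locale acg_prox_run =
  fixes f :: "'a::euclidean_space \<Rightarrow> real" and df :: "'a \<Rightarrow> 'a"
    and h :: "'a \<Rightarrow> ereal" and L lam :: real and x0 :: 'a
    and A tau a :: "nat \<Rightarrow> real" and x y xt yt :: "nat \<Rightarrow> 'a" and Gam :: "nat \<Rightarrow> 'a \<Rightarrow> real"
  assumes L_pos: "L > 0"
    and f_convex: "convex_on UNIV f"
    and f_smooth: "L_smooth L f df"
    and h_pcc: "proper_closed_convex h"
    and lam_pos: "lam > 0"
    and acg: "ACG_run L (1 / lam) (\<lambda>u. f u + 1 / (2 * lam) * (norm (u - x0))\<^sup>2)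
                (\<lambda>u. df u + (1 / lam) *\<^sub>R (u - x0)) h x0 A tau a x y xt yt Gam"
begin

abbreviation mu :: real where "mu \<equiv> 1 / lam"

definition g :: "'a \<Rightarrow> real" where "g u = f u + 1 / (2 * lam) * (norm (u - x0))\<^sup>2"
definition dg :: "'a \<Rightarrow> 'a" where "dg u = df u + mu *\<^sub>R (u - x0)"
definition psi :: "'a \<Rightarrow> ereal" where "psi u = ereal (g u) + h u"
definition gam :: "nat \<Rightarrow> 'a \<Rightarrow> real" where
  "gam j u = (lin_approx g dg (xt j) (yt (Suc j)) + real_of_ereal (h (yt (Suc j)))
               + mu / 2 * (norm (yt (Suc j) - xt j))\<^sup>2)
             + L * inner (xt j - yt (Suc j)) (u - yt (Suc j)) + mu / 2 * (norm (u - yt (Suc j)))\<^sup>2"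

lemma acg_run: "ACG_run L mu g dg h x0 A tau a x y xt yt Gam"
  using acg unfolding g_def[abs_def] dg_def[abs_def] .

lemma A_0: "A 0 = 0" and tau_0: "tau 0 = 1 / L" and y_0: "y 0 = x0" and x_0: "x 0 = x0"
  using acg_run unfolding ACG_run_def by blast+

lemma a_eq: "a j = (tau j + sqrt ((tau j)\<^sup>2 + 4 * tau j * A j)) / 2"
  and tau_Suc: "tau (Suc j) = tau j + mu * a j / L"
  and A_Suc: "A (Suc j) = A j + a j"
  and xt_eq: "xt j = (A j / A (Suc j)) *\<^sub>R y j + (a j / A (Suc j)) *\<^sub>R x j"
  and yt_argmin: "ereal (lin_approx g dg (xt j) (yt (Suc j))) + h (yt (Suc j))
                    + ereal ((L + mu) / 2 * (norm (yt (Suc j) - xt j))\<^sup>2)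
                  \<le> ereal (lin_approx g dg (xt j) u) + h u + ereal ((L + mu) / 2 * (norm (u - xt j))\<^sup>2)"
  and y_Suc: "y (Suc j) \<in> {y j, yt (Suc j)}"
  and psi_y_Suc_le_yt: "psi (y (Suc j)) \<le> psi (yt (Suc j))"
  and x_Suc: "x (Suc j) = (1 / (A (Suc j) * mu + 1)) *\<^sub>R
                (((L + mu) * a j) *\<^sub>R yt (Suc j) - (A j * a j * L / A (Suc j)) *\<^sub>R y j)"
  using acg_run unfolding ACG_run_def psi_def by blast+

lemma Gam_Suc: "Gam (Suc j) u = (A j * Gam j u + a j * gam j u) / A (Suc j)"
proof -
  have "Gam (Suc j) = (\<lambda>u. (A j * Gam j u + a j * gam j u) / A (Suc j))"
    using acg_run unfolding ACG_run_def gam_def by blast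
  then show ?thesis by simp
qed

subsection \<open>Growth of the sequence A\<close>

lemma tau_L_eq: "tau j * L = 1 + mu * A j" and A_nonneg: "0 \<le> A j"
proof -
  have "tau j * L = 1 + mu * A j \<and> 0 \<le> A j"
  proof (induction j)
    case 0
    then show ?case using A_0 tau_0 L_pos by simp
  next
    case (Suc j)
    have "0 < tau j * L"
      using Suc lam_pos by (simp add: add_pos_nonneg)
    then have "0 < tau j"
      using L_pos by (simp add: zero_less_mult_iff)
    then have "0 \<le> a j"
      unfolding a_eq using Suc by simp
    moreover have "tau (Suc j) * L = tau j * L + mu * a j"
      unfolding tau_Suc using L_pos by (simp add: algebra_simps)
    ultimately show ?case
      using Suc unfolding A_Suc by (simp add: algebra_simps)
  qed
  then show "tau j * L = 1 + mu * A j" "0 \<le> A j" by simp_all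
qed

lemma tau_pos: "0 < tau j"
proof -
  have "0 < tau j * L"
    using tau_L_eq[of j] A_nonneg[of j] lam_pos by (simp add: add_pos_nonneg)
  then show ?thesis using L_pos by (simp add: zero_less_mult_iff)
qed

lemma a_ge: "tau j / 2 + sqrt (tau j * A j) \<le> a j"
proof -
  have "sqrt (4 * (tau j * A j)) \<le> sqrt ((tau j)\<^sup>2 + 4 * tau j * A j)"
    by (simp add: mult.assoc)
  moreover have "sqrt (4 * (tau j * A j)) = 2 * sqrt (tau j * A j)"
    by (simp add: real_sqrt_mult)
  ultimately show ?thesis unfolding a_eq by simp
qed

lemma a_pos: "0 < a j"
proof -
  have "0 \<le> sqrt (tau j * A j)"
    using tau_pos[of j] A_nonneg[of j] by simp
  then show ?thesis
    using a_ge[of j] tau_pos[of j] by linarith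
qed

lemma A_Suc_pos: "0 < A (Suc j)"
  using A_Suc a_pos A_nonneg by (simp add: add_nonneg_pos)

lemma A_pos: "1 \<le> j \<Longrightarrow> 0 < A j"
  using A_Suc_pos by (cases j) auto

lemma a_0: "a 0 = 1 / L" and A_1: "A 1 = 1 / L"
proof -
  show "a 0 = 1 / L" unfolding a_eq using A_0 tau_0 L_pos by simp
  then show "A 1 = 1 / L" using A_Suc[of 0] A_0 by simp
qed

lemma a_square: "(a j)\<^sup>2 * L = (1 + mu * A j) * A (Suc j)"
proof -
  define s where "s = sqrt ((tau j)\<^sup>2 + 4 * tau j * A j)"
  have s2: "s\<^sup>2 = (tau j)\<^sup>2 + 4 * tau j * A j"
    unfolding s_def using tau_pos[of j] A_nonneg[of j] by simp
  have "(a j)\<^sup>2 = ((tau j)\<^sup>2 + 2 * tau j * s + s\<^sup>2) / 4"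
    unfolding a_eq s_def[symmetric] by (simp add: power2_eq_square algebra_simps)
  also have "\<dots> = tau j * A (Suc j)"
    unfolding s2 A_Suc a_eq s_def[symmetric] by (simp add: power2_eq_square algebra_simps)
  finally show ?thesis
    using tau_L_eq[of j] by (metis mult.commute mult.left_commute)
qed

lemma a_L_ge: "1 / 2 + sqrt (A j * L) \<le> a j * L"
proof -
  have tau_L: "1 \<le> tau j * L"
    using tau_L_eq[of j] lam_pos A_nonneg[of j] by simp
  have "(tau j / 2 + sqrt (tau j * A j)) * L = tau j * L / 2 + sqrt ((tau j * L) * (A j * L))"
    using L_pos by (simp add: algebra_simps real_sqrt_mult real_sqrt_mult_self)
  moreover have "sqrt (A j * L) \<le> sqrt ((tau j * L) * (A j * L))"
    using tau_L A_nonneg[of j] L_pos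
    by (intro real_sqrt_le_mono) (simp add: mult_right_mono[of 1 "tau j * L" "A j * L", simplified])
  moreover have "(tau j / 2 + sqrt (tau j * A j)) * L \<le> a j * L"
    using a_ge L_pos by (simp add: mult_right_mono)
  ultimately show ?thesis
    using tau_L by linarith
qed

lemma A_L_ge_square: "(real j)\<^sup>2 / 4 \<le> A j * L"
proof (induction j)
  case 0
  then show ?case using A_0 by simp
next
  case (Suc j)
  have "real j / 2 \<le> sqrt (A j * L)"
    using real_sqrt_le_mono[OF Suc] by (simp add: real_sqrt_divide)
  then have "(real j)\<^sup>2 / 4 + 1 / 2 + real j / 2 \<le> A (Suc j) * L"
    using Suc a_L_ge[of j] unfolding A_Suc by (simp add: algebra_simps)
  then show ?case
    by (simp add: power2_eq_square algebra_simps)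
qed

lemma a_ge_A: "A j * (1 / sqrt (lam * L) + 1 / (2 * lam * L)) \<le> a j"
proof -
  define k where "k = 1 / (lam * L)"
  have k: "0 < k" unfolding k_def using lam_pos L_pos by simp
  have tau_k: "A j * k \<le> tau j"
    using tau_L_eq[of j] L_pos lam_pos unfolding k_def by (simp add: field_simps)
  have Ak: "0 \<le> A j * k" using A_nonneg[of j] k by simp
  have "sqrt (4 * (A j * k) * A j) \<le> sqrt ((A j * k)\<^sup>2 + 4 * (A j * k) * A j)"
    by simp
  also have "\<dots> \<le> sqrt ((tau j)\<^sup>2 + 4 * tau j * A j)"
    using tau_k Ak A_nonneg[of j]
    by (intro real_sqrt_le_mono add_mono power_mono mult_right_mono) auto
  finally have "sqrt (4 * (A j * k) * A j) \<le> sqrt ((tau j)\<^sup>2 + 4 * tau j * A j)" .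
  moreover have "sqrt (4 * (A j * k) * A j) = 2 * A j * sqrt k"
  proof -
    have "4 * (A j * k) * A j = (2 * A j)\<^sup>2 * k" by (simp add: power2_eq_square)
    then show ?thesis using A_nonneg[of j] by (simp add: real_sqrt_mult)
  qed
  ultimately have "A j * k + 2 * A j * sqrt k \<le> tau j + sqrt ((tau j)\<^sup>2 + 4 * tau j * A j)"
    using tau_k by linarith
  then have "(A j * k + 2 * A j * sqrt k) / 2 \<le> a j"
    unfolding a_eq by (simp add: divide_right_mono)
  moreover have "(A j * k + 2 * A j * sqrt k) / 2 = A j * (1 / sqrt (lam * L) + 1 / (2 * lam * L))"
    unfolding k_def by (simp add: real_sqrt_divide algebra_simps)
  ultimately show ?thesis by simp
qed

lemma A_L_ge_power: "(1 + 1 / sqrt (lam * L) + 1 / (2 * lam * L)) ^ k \<le> A (Suc k) * L"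
proof (induction k)
  case 0
  then show ?case using A_1 L_pos by simp
next
  case (Suc k)
  define p where "p = 1 + 1 / sqrt (lam * L) + 1 / (2 * lam * L)"
  have "0 \<le> p" unfolding p_def using lam_pos L_pos by simp
  have "A (Suc k) * p \<le> A (Suc (Suc k))"
    using a_ge_A[of "Suc k"] unfolding A_Suc[of "Suc k"] p_def by (simp add: algebra_simps)
  then have "(A (Suc k) * L) * p \<le> A (Suc (Suc k)) * L"
    using L_pos by (simp add: mult_right_mono algebra_simps)
  moreover have "p ^ k * p \<le> (A (Suc k) * L) * p"
    using Suc \<open>0 \<le> p\<close> unfolding p_def by (simp add: mult_right_mono)
  ultimately show ?case unfolding p_def by (simp add: mult.commute)
qed

lemma lam_div_A_le_if_quadratic_bound:
  assumes "2 * sqrt (6 * lam * L) \<le> real J"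
  shows "lam / A J \<le> 0.31"
proof -
  have "(2 * sqrt (6 * lam * L))\<^sup>2 \<le> (real J)\<^sup>2"
    using assms L_pos lam_pos by (intro power_mono) auto
  then have "24 * (lam * L) \<le> (real J)\<^sup>2"
    using L_pos lam_pos by (simp add: power_mult_distrib algebra_simps)
  then have "6 * lam * L \<le> A J * L"
    using A_L_ge_square[of J] by simp
  then have "6 * lam \<le> A J"
    using L_pos by simp
  then show ?thesis
    using lam_pos by (simp add: divide_le_eq)
qed

lemma lam_div_A_le_if_log_bound:
  assumes lam_L: "1 / 2 < lam * L" and J: "2 \<le> J"
    and bound: "(1 / 2 + sqrt (lam * L)) * ln (6 * lam * L) \<le> real J"
  shows "lam / A J \<le> 0.31"
proof -
  define w where "w = sqrt (lam * L)"
  have w2: "w\<^sup>2 = lam * L"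
    unfolding w_def using lam_L by simp
  have "sqrt (0.7\<^sup>2) \<le> w"
    unfolding w_def using lam_L by (intro real_sqrt_le_mono) (simp add: power2_eq_square)
  then have w: "0.7 \<le> w" by simp
  have "lam * L / 0.31 \<le> (1 + 1 / w + 1 / (2 * w\<^sup>2)) ^ (J - 1)"
    using growth_factor_power_ge[OF w J] bound unfolding w2 w_def[symmetric]
    by (simp add: mult.assoc)
  also have "\<dots> \<le> A J * L"
    using A_L_ge_power[of "J - 1"] J unfolding w2 w_def[symmetric]
    by (simp add: mult.assoc)
  finally have "lam \<le> 0.31 * A J"
    using L_pos by (simp add: field_simps)
  then show ?thesis
    using lam_pos by (simp add: divide_le_eq)
qed

lemma exists_iteration_with_small_lam_div_A:
  obtains J where "1 \<le> J"
    and "real J \<le> max 1 (of_int \<lceil>min (2 * sqrt (6 * lam * L))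
                                    ((1 / 2 + sqrt (lam * L)) * ln (6 * lam * L))\<rceil>)"
    and "lam / A J \<le> 0.31 \<or> (J = 1 \<and> lam / A J \<le> 1 / 2)"
proof (cases "lam * L \<le> 1 / 2")
  case True
  then show ?thesis
    using that[of 1] A_1 by simp
next
  case False
  then have lam_L: "1 / 2 < lam * L" by simp
  define B where "B = min (2 * sqrt (6 * lam * L)) ((1 / 2 + sqrt (lam * L)) * ln (6 * lam * L))"
  have "1 < B"
    using iteration_bound_gt_one[OF lam_L] unfolding B_def by (simp add: mult.assoc)
  define J where "J = nat \<lceil>B\<rceil>"
  have J: "real J = of_int \<lceil>B\<rceil>" "B \<le> real J" "2 \<le> J"
    using \<open>1 < B\<close> unfolding J_def by (simp_all add: le_nat_iff le_ceiling_iff)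
  have "lam / A J \<le> 0.31"
  proof (cases "2 * sqrt (6 * lam * L) \<le> real J")
    case True
    then show ?thesis by (rule lam_div_A_le_if_quadratic_bound)
  next
    case False
    then have "(1 / 2 + sqrt (lam * L)) * ln (6 * lam * L) \<le> real J"
      using J(2) unfolding B_def min_le_iff_disj by linarith
    then show ?thesis
      by (rule lam_div_A_le_if_log_bound[OF lam_L J(3)])
  qed
  then show ?thesis
    using that[of J] J unfolding B_def by simp
qed

subsection \<open>The lower models\<close>

lemma f_has_gradient: "(f has_derivative (\<lambda>d. inner (df u) d)) (at u)"
  using f_smooth unfolding L_smooth_def by blast

lemma g_expansion:
  "g u = g z + inner (mu *\<^sub>R (z - x0)) (u - z) + mu / 2 * (norm (u - z))\<^sup>2 + (f u - f z)"
proof -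
  have "1 / (2 * lam) * (norm (u - x0))\<^sup>2
      = 1 / (2 * lam) * (norm (z - x0))\<^sup>2 + inner (0 + mu *\<^sub>R (z - x0)) (u - z)
        + mu / 2 * (norm (u - z))\<^sup>2"
    by (rule quadratic_recenter[where F = "\<lambda>u. 1 / (2 * lam) * (norm (u - x0))\<^sup>2" and x = x0 and p = 0])
      simp
  then show ?thesis
    unfolding g_def by simp
qed

lemma inner_dg: "inner (dg z) (u - z) = inner (df z) (u - z) + inner (mu *\<^sub>R (z - x0)) (u - z)"
  unfolding dg_def by (simp add: inner_add_left)

lemma g_lower_bound: "g z + inner (dg z) (u - z) + mu / 2 * (norm (u - z))\<^sup>2 \<le> g u"
  using convex_on_gradient_inequality[OF f_convex f_has_gradient, of z u]
    g_expansion[of u z] inner_dg[of z u] by linarith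

lemma g_upper_bound: "g u \<le> g z + inner (dg z) (u - z) + (L + mu) / 2 * (norm (u - z))\<^sup>2"
proof -
  have "(L + mu) / 2 * (norm (u - z))\<^sup>2 = L / 2 * (norm (u - z))\<^sup>2 + mu / 2 * (norm (u - z))\<^sup>2"
    by (simp add: algebra_simps)
  then show ?thesis
    using L_smooth_quadratic_upper_bound[OF f_smooth, of u z] g_expansion[of u z] inner_dg[of z u]
    by linarith
qed

lemma h_not_minf: "h u \<noteq> -\<infinity>"
  and h_epigraph_convex: "convex (ereal_epigraph h)"
  and h_proper: "\<exists>u. h u \<noteq> \<infinity>"
  using h_pcc unfolding proper_closed_convex_def by blast+

lemma h_yt_finite: "h (yt (Suc j)) \<noteq> \<infinity>"
proof
  assume inf: "h (yt (Suc j)) = \<infinity>"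
  obtain u where u: "h u \<noteq> \<infinity>"
    using h_proper by blast
  have "ereal (lin_approx g dg (xt j) u) + h u + ereal ((L + mu) / 2 * (norm (u - xt j))\<^sup>2) \<noteq> \<infinity>"
    using u h_not_minf[of u] by (cases "h u") auto
  then show False
    using yt_argmin[of j u] inf by simp
qed

lemma h_yt_subgradient:
  "h (yt (Suc j)) + ereal (inner (dg (xt j)) (yt (Suc j) - u)
     + (L + mu) * inner (xt j - yt (Suc j)) (u - yt (Suc j))) \<le> h u"
  by (rule prox_variational_inequality[OF h_epigraph_convex h_not_minf h_yt_finite
        yt_argmin[unfolded lin_approx_def]])

text \<open>The subgradient inequality for \<open>h\<close> at \<open>yt (Suc j)\<close> plus the strong convexity of \<open>g\<close>
  at \<open>xt j\<close>.\<close>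
lemma gam_le_psi: "ereal (gam j u) \<le> psi u"
proof (cases "h u")
  case (real hu)
  obtain hy where hy: "h (yt (Suc j)) = ereal hy"
    using h_yt_finite[of j] h_not_minf by (cases "h (yt (Suc j))") auto
  define yy z where "yy = yt (Suc j)" and "z = xt j"
  have sub: "hy + inner (dg z) (yy - u) + (L + mu) * inner (z - yy) (u - yy) \<le> hu"
    using h_yt_subgradient[of j u] real hy unfolding yy_def z_def by simp
  have gam_u: "gam j u = g z + inner (dg z) (yy - z) + hy + mu / 2 * (norm (yy - z))\<^sup>2
      + L * inner (z - yy) (u - yy) + mu / 2 * (norm (u - yy))\<^sup>2"
    unfolding gam_def lin_approx_def yy_def z_def hy by simp
  have swap: "inner (u - yy) (yy - z) = - inner (z - yy) (u - yy)"
    by (simp add: inner_commute inner_diff_left inner_diff_right)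
  have "u - yy + (yy - z) = u - z"
    by simp
  then have n: "(norm (u - z))\<^sup>2 = (norm (u - yy))\<^sup>2 + 2 * inner (u - yy) (yy - z) + (norm (yy - z))\<^sup>2"
    using power2_norm_add[of "u - yy" "yy - z"] by simp
  have "mu / 2 * (norm (u - z))\<^sup>2
      = mu / 2 * (norm (u - yy))\<^sup>2 + mu * inner (u - yy) (yy - z) + mu / 2 * (norm (yy - z))\<^sup>2"
    unfolding n using lam_pos by (simp add: field_simps)
  moreover have "mu * inner (u - yy) (yy - z) = - (mu * inner (z - yy) (u - yy))"
    using swap by simp
  moreover have "inner (dg z) (u - z) = inner (dg z) (yy - z) - inner (dg z) (yy - u)"
    by (simp add: inner_diff_right)
  moreover have "(L + mu) * inner (z - yy) (u - yy) = L * inner (z - yy) (u - yy) + mu * inner (z - yy) (u - yy)"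
    by (simp add: distrib_right)
  ultimately have "gam j u \<le> g z + inner (dg z) (u - z) + mu / 2 * (norm (u - z))\<^sup>2 + hu"
    using sub gam_u by linarith
  also have "\<dots> \<le> g u + hu"
    using g_lower_bound by simp
  finally show ?thesis
    unfolding psi_def real by simp
qed (auto simp: psi_def h_not_minf)

lemma psi_not_minf: "psi u \<noteq> -\<infinity>"
  unfolding psi_def using h_not_minf[of u] by simp

lemma A_Gam_Suc: "A (Suc j) * Gam (Suc j) u = A j * Gam j u + a j * gam j u"
  using Gam_Suc[of j u] A_Suc_pos[of j] by simp

lemma A_Gam_le: "psi u = ereal P \<Longrightarrow> A j * Gam j u \<le> A j * P"
proof (induction j)
  case 0
  then show ?case using A_0 by simp
next
  case (Suc j)
  have "a j * gam j u \<le> a j * P"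
    using gam_le_psi[of j u] Suc.prems a_pos[of j] by simp
  then show ?case
    using Suc A_Gam_Suc[of j u] unfolding A_Suc by (simp add: algebra_simps)
qed

lemma Gam_le_psi:
  assumes "1 \<le> j"
  shows "ereal (Gam j u) \<le> psi u"
proof (cases "psi u")
  case (real P)
  then show ?thesis
    using A_Gam_le[of u P j] A_pos[OF assms] by simp
qed (simp_all add: psi_not_minf)

lemma gam_expansion:
  "gam j u = gam j (yt (Suc j)) + inner (L *\<^sub>R (xt j - yt (Suc j))) (u - yt (Suc j))
     + mu / 2 * (norm (u - yt (Suc j)))\<^sup>2"
  unfolding gam_def by simp

text \<open>\<open>x\<^sub>j\<^sub>+\<^sub>1\<close> is the stationary point of \<open>A\<^sub>j\<^sub>+\<^sub>1 \<Gamma>\<^sub>j\<^sub>+\<^sub>1 + \<parallel>\<cdot> - x\<^sub>0\<parallel>\<^sup>2/2\<close>.\<close>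
lemma x_Suc_stationary:
  "(x0 - x j) + (A j * mu) *\<^sub>R (x (Suc j) - x j)
     + a j *\<^sub>R (L *\<^sub>R (xt j - yt (Suc j)) + mu *\<^sub>R (x (Suc j) - yt (Suc j))) = x0 - x (Suc j)"
proof -
  define A' where "A' = A (Suc j)"
  have A': "0 < A'" unfolding A'_def by (rule A_Suc_pos)
  have x': "(1 + A' * mu) *\<^sub>R x (Suc j) = ((L + mu) * a j) *\<^sub>R yt (Suc j) - (A j * a j * L / A') *\<^sub>R y j"
  proof -
    have "0 < A' * mu + 1" using A' lam_pos by (simp add: add_pos_pos)
    then show ?thesis unfolding x_Suc A'_def[symmetric] by (simp add: add.commute)
  qed
  have xt: "(a j * L) *\<^sub>R xt j = (a j * L * A j / A') *\<^sub>R y j + ((a j)\<^sup>2 * L / A') *\<^sub>R x j"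
    unfolding xt_eq A'_def[symmetric] by (simp add: scaleR_add_right power2_eq_square)
  have a2: "(a j)\<^sup>2 * L / A' = 1 + mu * A j"
    using a_square[of j] A' unfolding A'_def[symmetric] by (simp add: field_simps)
  have "(x0 - x j) + (A j * mu) *\<^sub>R (x (Suc j) - x j)
      + a j *\<^sub>R (L *\<^sub>R (xt j - yt (Suc j)) + mu *\<^sub>R (x (Suc j) - yt (Suc j))) - (x0 - x (Suc j))
    = (1 + A' * mu) *\<^sub>R x (Suc j) - (1 + mu * A j) *\<^sub>R x j + (a j * L) *\<^sub>R xt j
      - ((L + mu) * a j) *\<^sub>R yt (Suc j)"
    unfolding A'_def A_Suc by (simp add: algebra_simps)
  also have "\<dots> = 0"
    unfolding x' xt a2 by (simp add: algebra_simps)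
  finally show ?thesis
    by (simp only: right_minus_eq)
qed

lemma A_Gam_expansion:
  "A j * Gam j u = A j * Gam j (x j) + inner (x0 - x j) (u - x j) + A j * mu / 2 * (norm (u - x j))\<^sup>2"
proof (induction j arbitrary: u)
  case 0
  then show ?case using A_0 x_0 by simp
next
  case (Suc j)
  define x' d where "x' = x (Suc j)" and "d = u - x'"
  define q p where "q = (x0 - x j) + (A j * mu) *\<^sub>R (x' - x j)"
    and "p = L *\<^sub>R (xt j - yt (Suc j)) + mu *\<^sub>R (x' - yt (Suc j))"
  have AGam: "A j * Gam j u = A j * Gam j x' + inner q d + A j * mu / 2 * (norm d)\<^sup>2"
    using quadratic_recenter[where F = "\<lambda>u. A j * Gam j u" and x' = x' and u = u, OF Suc.IH]
    unfolding q_def d_def by simp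
  have gam: "gam j u = gam j x' + inner p d + mu / 2 * (norm d)\<^sup>2"
    using quadratic_recenter[where F = "gam j" and x' = x' and u = u, OF gam_expansion]
    unfolding p_def d_def by simp
  have "A (Suc j) * Gam (Suc j) u = A j * Gam j u + a j * gam j u"
    by (rule A_Gam_Suc)
  also have "\<dots> = A (Suc j) * Gam (Suc j) x' + (inner q d + a j * inner p d)
      + A (Suc j) * mu / 2 * (norm d)\<^sup>2"
    unfolding AGam gam A_Gam_Suc[of j x'] unfolding A_Suc by (simp add: algebra_simps)
  also have "inner q d + a j * inner p d = inner (q + a j *\<^sub>R p) d"
    by (simp add: inner_add_left)
  also have "q + a j *\<^sub>R p = x0 - x'"
    unfolding q_def p_def x'_def by (rule x_Suc_stationary)
  finally show ?case
    unfolding x'_def d_def .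
qed

text \<open>The minimum of \<open>A\<^sub>j \<Gamma>\<^sub>j + \<parallel>\<cdot> - x\<^sub>0\<parallel>\<^sup>2/2\<close>, attained at \<open>x\<^sub>j\<close>.\<close>
definition model_min :: "nat \<Rightarrow> real" where
  "model_min j = A j * Gam j (x j) + 1 / 2 * (norm (x j - x0))\<^sup>2"

lemma model_min_expansion:
  "A j * Gam j u + 1 / 2 * (norm (u - x0))\<^sup>2 = model_min j + (1 + A j * mu) / 2 * (norm (u - x j))\<^sup>2"
proof -
  define I N where "I = inner (x0 - x j) (u - x j)" and "N = (norm (u - x j))\<^sup>2"
  have "u - x j - (x0 - x j) = u - x0"
    by simp
  then have "(norm (u - x0))\<^sup>2 = N - 2 * I + (norm (x j - x0))\<^sup>2"
    using power2_norm_diff[of "u - x j" "x0 - x j"] unfolding I_def N_def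
    by (simp add: inner_commute norm_minus_commute)
  moreover have "A j * Gam j u = A j * Gam j (x j) + I + A j * mu / 2 * N"
    unfolding I_def N_def by (rule A_Gam_expansion)
  ultimately show ?thesis
    unfolding model_min_def N_def[symmetric] by (simp add: field_simps)
qed

lemma model_min_Suc:
  "model_min (Suc j) = model_min j + (1 + A j * mu) / 2 * (norm (x (Suc j) - x j))\<^sup>2
     + a j * gam j (x (Suc j))"
  using model_min_expansion[of "Suc j" "x (Suc j)"] model_min_expansion[of j "x (Suc j)"]
    A_Gam_Suc[of j "x (Suc j)"] by simp

lemma psi_y_Suc_le:
  "psi (y (Suc j)) \<le> ereal (gam j (yt (Suc j)) + L / 2 * (norm (yt (Suc j) - xt j))\<^sup>2)"
proof -
  obtain hy where hy: "h (yt (Suc j)) = ereal hy"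
    using h_yt_finite[of j] h_not_minf by (cases "h (yt (Suc j))") auto
  have "gam j (yt (Suc j))
      = g (xt j) + inner (dg (xt j)) (yt (Suc j) - xt j) + hy + mu / 2 * (norm (yt (Suc j) - xt j))\<^sup>2"
    unfolding gam_def lin_approx_def hy by simp
  moreover have "(L + mu) / 2 * (norm (yt (Suc j) - xt j))\<^sup>2
      = L / 2 * (norm (yt (Suc j) - xt j))\<^sup>2 + mu / 2 * (norm (yt (Suc j) - xt j))\<^sup>2"
    by (simp add: algebra_simps)
  ultimately have "g (yt (Suc j)) + hy \<le> gam j (yt (Suc j)) + L / 2 * (norm (yt (Suc j) - xt j))\<^sup>2"
    using g_upper_bound[of "yt (Suc j)" "xt j"] by linarith
  then have "psi (yt (Suc j)) \<le> ereal (gam j (yt (Suc j)) + L / 2 * (norm (yt (Suc j) - xt j))\<^sup>2)"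
    unfolding psi_def hy by simp
  with psi_y_Suc_le_yt[of j] show ?thesis
    by (rule order_trans)
qed

lemma gam_plus_quadratic_min:
  "gam j (yt (Suc j)) + L / 2 * (norm (yt (Suc j) - xt j))\<^sup>2 \<le> gam j u + L / 2 * (norm (u - xt j))\<^sup>2"
proof -
  define yy z where "yy = yt (Suc j)" and "z = xt j"
  have "u - yy - (z - yy) = u - z"
    by simp
  then have n: "(norm (u - z))\<^sup>2 = (norm (u - yy))\<^sup>2 - 2 * inner (u - yy) (z - yy) + (norm (z - yy))\<^sup>2"
    using power2_norm_diff[of "u - yy" "z - yy"] by simp
  have "L / 2 * (norm (u - z))\<^sup>2
      = L / 2 * (norm (u - yy))\<^sup>2 - L * inner (z - yy) (u - yy) + L / 2 * (norm (z - yy))\<^sup>2"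
    unfolding n by (simp add: field_simps inner_commute)
  moreover have "L / 2 * (norm (yy - z))\<^sup>2 = L / 2 * (norm (z - yy))\<^sup>2"
    by (simp add: norm_minus_commute)
  moreover have "gam j u = gam j yy + L * inner (z - yy) (u - yy) + mu / 2 * (norm (u - yy))\<^sup>2"
    using gam_expansion[of j u] unfolding yy_def z_def by simp
  moreover have "0 \<le> mu / 2 * (norm (u - yy))\<^sup>2 + L / 2 * (norm (u - yy))\<^sup>2"
    using lam_pos L_pos by simp
  ultimately show ?thesis
    unfolding yy_def z_def by linarith
qed

lemma convex_on_gam: "convex_on UNIV (gam j)"
proof -
  define yy c G0 where "yy = yt (Suc j)" and "c = xt j - yt (Suc j)" and "G0 = gam j (yt (Suc j))"
  have gam: "gam j = (\<lambda>u. (G0 + L * inner c (u - yy)) + mu / 2 * (norm (u - yy))\<^sup>2)"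
  proof (rule ext)
    fix u
    show "gam j u = (G0 + L * inner c (u - yy)) + mu / 2 * (norm (u - yy))\<^sup>2"
      using gam_expansion[of j u] unfolding yy_def c_def G0_def by simp
  qed
  have "convex_on UNIV (\<lambda>u. G0 + L * inner c (u - yy))"
  proof (rule convex_onI)
    fix t :: real and u v :: 'a
    have "inner c ((1 - t) *\<^sub>R u + t *\<^sub>R v - yy) = (1 - t) * inner c (u - yy) + t * inner c (v - yy)"
      by (simp add: inner_diff_right inner_add_right algebra_simps)
    then show "G0 + L * inner c ((1 - t) *\<^sub>R u + t *\<^sub>R v - yy)
        \<le> (1 - t) * (G0 + L * inner c (u - yy)) + t * (G0 + L * inner c (v - yy))"
      by (simp add: algebra_simps)
  qed simp
  moreover have "convex_on UNIV (\<lambda>u. mu / 2 * (norm (u - yy))\<^sup>2)"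
    using lam_pos by (intro convex_on_cmul convex_on_power2_norm_diff) simp
  ultimately show ?thesis
    unfolding gam by (rule convex_on_add)
qed

lemma L_dist_xt_average:
  "A (Suc j) * (L / 2 * (norm ((A j / A (Suc j)) *\<^sub>R y j + (a j / A (Suc j)) *\<^sub>R x (Suc j) - xt j))\<^sup>2)
     = (1 + A j * mu) / 2 * (norm (x (Suc j) - x j))\<^sup>2"
proof -
  define A' N where "A' = A (Suc j)" and "N = (norm (x (Suc j) - x j))\<^sup>2"
  have A': "0 < A'" unfolding A'_def by (rule A_Suc_pos)
  have "(A j / A') *\<^sub>R y j + (a j / A') *\<^sub>R x (Suc j) - xt j = (a j / A') *\<^sub>R (x (Suc j) - x j)"
    unfolding xt_eq A'_def[symmetric] by (simp add: algebra_simps)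
  then have "(norm ((A j / A') *\<^sub>R y j + (a j / A') *\<^sub>R x (Suc j) - xt j))\<^sup>2 = (a j / A')\<^sup>2 * N"
    unfolding N_def using A' a_pos[of j] by (simp add: power_mult_distrib power_divide)
  then have "A' * (L / 2 * (norm ((A j / A') *\<^sub>R y j + (a j / A') *\<^sub>R x (Suc j) - xt j))\<^sup>2)
      = ((a j)\<^sup>2 * L) * N / (2 * A')"
    using A' by (simp add: field_simps power2_eq_square)
  also have "\<dots> = (1 + A j * mu) / 2 * N"
    unfolding a_square A'_def[symmetric] using A' by (simp add: field_simps)
  finally show ?thesis
    unfolding A'_def N_def .
qed

text \<open>Stated with \<open>gam j (y j) \<le> psi (y j)\<close> in place of \<open>psi (y j)\<close>, so that it also starts the
  induction at \<open>j = 0\<close>, where \<open>y 0 = x0\<close> need not lie in the domain of \<open>h\<close>.\<close>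
lemma model_min_step:
  assumes "A j * gam j (y j) \<le> model_min j"
  shows "\<exists>P. psi (y (Suc j)) = ereal P \<and> A (Suc j) * P \<le> model_min (Suc j)"
proof -
  define A' w z where "A' = A (Suc j)" and "w = (A j / A') *\<^sub>R y j + (a j / A') *\<^sub>R x (Suc j)"
    and "z = xt j"
  have A': "0 < A'" unfolding A'_def by (rule A_Suc_pos)
  define U where "U = gam j (yt (Suc j)) + L / 2 * (norm (yt (Suc j) - z))\<^sup>2"
  obtain P where P: "psi (y (Suc j)) = ereal P" and "P \<le> U"
    using psi_y_Suc_le[of j] psi_not_minf[of "y (Suc j)"] unfolding U_def z_def
    by (cases "psi (y (Suc j))") auto
  have conv: "A' * gam j w \<le> A j * gam j (y j) + a j * gam j (x (Suc j))"
  proof -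
    have "A j / A' = 1 - a j / A'"
      using A' unfolding A'_def A_Suc by (simp add: field_simps)
    moreover have "0 \<le> a j / A'" "a j / A' \<le> 1"
      using A' a_pos[of j] A_nonneg[of j] unfolding A'_def A_Suc by simp_all
    ultimately have "gam j w \<le> (1 - a j / A') * gam j (y j) + (a j / A') * gam j (x (Suc j))"
      using convex_onD[OF convex_on_gam, of "a j / A'" "y j" "x (Suc j)"] unfolding w_def by simp
    then have "A' * gam j w \<le> (A' - a j) * gam j (y j) + a j * gam j (x (Suc j))"
      using A' by (simp add: field_simps)
    then show ?thesis
      unfolding A'_def A_Suc by simp
  qed
  have "A' * P \<le> A' * (gam j w + L / 2 * (norm (w - z))\<^sup>2)"
    using \<open>P \<le> U\<close> gam_plus_quadratic_min[of j w] A' unfolding U_def z_def by (simp add: mult_left_mono)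
  also have "\<dots> = A' * gam j w + (1 + A j * mu) / 2 * (norm (x (Suc j) - x j))\<^sup>2"
    using L_dist_xt_average[of j] unfolding A'_def w_def z_def by (simp add: algebra_simps)
  also have "\<dots> \<le> A j * gam j (y j) + a j * gam j (x (Suc j))
      + (1 + A j * mu) / 2 * (norm (x (Suc j) - x j))\<^sup>2"
    using conv by simp
  also have "\<dots> \<le> model_min (Suc j)"
    using model_min_Suc[of j] assms by simp
  finally show ?thesis
    using P unfolding A'_def by blast
qed

lemma model_min_invariant: "\<exists>P. psi (y (Suc j)) = ereal P \<and> A (Suc j) * P \<le> model_min (Suc j)"
proof (induction j)
  case 0
  have "A 0 * gam 0 (y 0) \<le> model_min 0"
    unfolding model_min_def using A_0 x_0 by simp
  then show ?case
    by (rule model_min_step)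
next
  case (Suc j)
  then obtain P where P: "psi (y (Suc j)) = ereal P" "A (Suc j) * P \<le> model_min (Suc j)"
    by blast
  have "A (Suc j) * gam (Suc j) (y (Suc j)) \<le> A (Suc j) * P"
    using gam_le_psi[of "Suc j" "y (Suc j)"] P(1) A_nonneg by (simp add: mult_left_mono)
  with P(2) show ?case
    by (intro model_min_step) linarith
qed

subsection \<open>The inexact proximal certificate\<close>

definition phi :: "'a \<Rightarrow> ereal" where "phi u = ereal (f u) + h u"

definition v_hat :: "nat \<Rightarrow> 'a" where "v_hat j = (1 / A j) *\<^sub>R (x0 - x j) + mu *\<^sub>R (x0 - x j)"

definition phi_model :: "nat \<Rightarrow> 'a \<Rightarrow> real" where
  "phi_model j u = Gam j u - 1 / (2 * lam) * (norm (u - x0))\<^sup>2"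

definition eps :: "nat \<Rightarrow> real" where
  "eps j = real_of_ereal (phi (y j)) - phi_model j (x j) - inner (v_hat j) (y j - x j)"

lemma psi_eq_phi: "psi u = phi u + ereal (1 / (2 * lam) * (norm (u - x0))\<^sup>2)"
  unfolding psi_def phi_def g_def by (simp add: ac_simps)

lemma phi_eq_of_psi: "psi u = ereal P \<Longrightarrow> phi u = ereal (P - 1 / (2 * lam) * (norm (u - x0))\<^sup>2)"
  unfolding psi_eq_phi by (cases "phi u") auto

lemma phi_model_le_phi:
  assumes "1 \<le> j"
  shows "ereal (phi_model j u) \<le> phi u"
proof (cases "h u")
  case (real hu)
  then have "Gam j u \<le> g u + hu"
    using Gam_le_psi[OF assms, of u] unfolding psi_def by simp
  then show ?thesis
    unfolding phi_model_def phi_def g_def real by simp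
qed (simp_all add: phi_def h_not_minf)

lemma phi_model_affine:
  assumes j: "1 \<le> j"
  shows "phi_model j u = phi_model j (x j) + inner (v_hat j) (u - x j)"
proof -
  define I N where "I = inner (x0 - x j) (u - x j)" and "N = (norm (u - x j))\<^sup>2"
  have Aj: "0 < A j"
    using A_pos[OF j] .
  have swap: "inner (x j - x0) (u - x j) = - I"
    unfolding I_def by (simp add: inner_diff_left)
  have "A j * Gam j u = A j * (Gam j (x j) + I / A j + mu / 2 * N)"
    using A_Gam_expansion[of j u, folded I_def N_def] Aj by (simp add: field_simps)
  then have "Gam j u = Gam j (x j) + I / A j + mu / 2 * N"
    using Aj by simp
  moreover have "1 / (2 * lam) * (norm (u - x0))\<^sup>2
      = 1 / (2 * lam) * (norm (x j - x0))\<^sup>2 - mu * I + mu / 2 * N"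
    using g_expansion[of u "x j", folded N_def] swap unfolding g_def by simp
  moreover have "inner (v_hat j) (u - x j) = I / A j + mu * I"
    unfolding v_hat_def I_def by (simp add: inner_add_left)
  ultimately show ?thesis
    unfolding phi_model_def by simp
qed

lemma psi_y_finite:
  assumes "1 \<le> j"
  obtains P where "psi (y j) = ereal P" and "A j * P \<le> model_min j"
  using model_min_invariant[of "j - 1"] assms by auto

lemma eps_eq:
  assumes j: "1 \<le> j" and P: "psi (y j) = ereal P"
  shows "eps j = P - Gam j (y j)"
  using phi_model_affine[OF j, of "y j"]
  unfolding eps_def phi_eq_of_psi[OF P] phi_model_def by simp

lemma v_hat_eps_subdiff:
  assumes j: "1 \<le> j"
  shows "v_hat j \<in> eps_subdiff phi (eps j) (y j)"
proof -
  obtain P where P: "psi (y j) = ereal P"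
    using psi_y_finite[OF j] by blast
  have "phi (y j) + ereal (inner (v_hat j) (u - y j) - eps j) = ereal (phi_model j u)" for u
  proof -
    have "inner (v_hat j) (u - y j) = inner (v_hat j) (u - x j) - inner (v_hat j) (y j - x j)"
      by (simp add: inner_diff_right)
    then show ?thesis
      using phi_model_affine[OF j, of u] phi_model_affine[OF j, of "y j"] eps_eq[OF j P]
      unfolding phi_eq_of_psi[OF P] phi_model_def by simp
  qed
  then show ?thesis
    unfolding eps_subdiff_def using phi_model_le_phi[OF j] by simp
qed

lemma eps_bounds:
  assumes j: "1 \<le> j"
  shows "0 \<le> 2 * lam * eps j"
    and "2 * lam * eps j \<le> lam / A j * (norm (x0 - x j))\<^sup>2
           - 2 * (lam / A j) * inner (x0 - x j) (y j - x j) - (norm (y j - x j))\<^sup>2"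
proof -
  obtain P where P: "psi (y j) = ereal P" and AP: "A j * P \<le> model_min j"
    using psi_y_finite[OF j] by blast
  have Aj: "0 < A j"
    using A_pos[OF j] .
  have "Gam j (y j) \<le> P"
    using Gam_le_psi[OF j, of "y j"] P by simp
  then show "0 \<le> 2 * lam * eps j"
    using eps_eq[OF j P] lam_pos by simp
  have "A j * eps j = A j * P - A j * Gam j (y j)"
    using eps_eq[OF j P] by (simp add: right_diff_distrib)
  moreover have "(norm (x j - x0))\<^sup>2 = (norm (x0 - x j))\<^sup>2"
    by (simp add: norm_minus_commute)
  ultimately have "A j * eps j \<le> 1 / 2 * (norm (x0 - x j))\<^sup>2 - inner (x0 - x j) (y j - x j)
      - A j * mu / 2 * (norm (y j - x j))\<^sup>2"
    using AP A_Gam_expansion[of j "y j"] unfolding model_min_def by linarith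
  then have "2 * (lam / A j) * (A j * eps j) \<le> 2 * (lam / A j) * (1 / 2 * (norm (x0 - x j))\<^sup>2
      - inner (x0 - x j) (y j - x j) - A j * mu / 2 * (norm (y j - x j))\<^sup>2)"
    using Aj lam_pos by (intro mult_left_mono) auto
  moreover have "2 * (lam / A j) * (A j * eps j) = 2 * lam * eps j"
    using Aj by simp
  moreover have "2 * (lam / A j) * (1 / 2 * (norm (x0 - x j))\<^sup>2
      - inner (x0 - x j) (y j - x j) - A j * mu / 2 * (norm (y j - x j))\<^sup>2)
    = lam / A j * (norm (x0 - x j))\<^sup>2 - 2 * (lam / A j) * inner (x0 - x j) (y j - x j)
      - (norm (y j - x j))\<^sup>2"
    using Aj lam_pos by (simp add: field_simps)
  ultimately show "2 * lam * eps j \<le> lam / A j * (norm (x0 - x j))\<^sup>2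
      - 2 * (lam / A j) * inner (x0 - x j) (y j - x j) - (norm (y j - x j))\<^sup>2"
    by linarith
qed

lemma x_1: "x 1 = yt 1"
proof -
  have "(L + mu) * a 0 = A 1 * mu + 1"
    unfolding a_0 A_1 using L_pos by (simp add: field_simps)
  moreover have "0 < A 1 * mu + 1"
    unfolding A_1 using L_pos lam_pos by (simp add: add_pos_pos)
  ultimately show ?thesis
    using x_Suc[of 0] A_0 by simp
qed

lemma y_1_cases: "y 1 = x0 \<or> y 1 = x 1"
  using y_Suc[of 0] y_0 x_1 by auto

lemma error_criterion:
  assumes j: "1 \<le> j" and small: "lam / A j \<le> 0.31 \<or> (j = 1 \<and> lam / A j \<le> 1 / 2)"
  shows "(norm (lam *\<^sub>R v_hat j + y j - x0))\<^sup>2 + 2 * lam * eps j \<le> 0.9 * (norm (x0 - y j))\<^sup>2"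
proof -
  define s where "s = lam / A j"
  have s: "0 < s"
    unfolding s_def using A_pos[OF j] lam_pos by simp
  have v: "lam *\<^sub>R v_hat j + y j - x0 = s *\<^sub>R (x0 - x j) + (y j - x j)"
    unfolding v_hat_def s_def using lam_pos by (simp add: algebra_simps)
  have y: "x0 - y j = (x0 - x j) - (y j - x j)"
    by simp
  have "s \<le> 0.31 \<or> (s \<le> 1 / 2 \<and> (y j - x j = 0 \<or> x0 - x j = y j - x j))"
    using small y_1_cases unfolding s_def by auto
  then show ?thesis
    unfolding v y by (rule relative_error_bound[OF s eps_bounds[OF j, folded s_def]])
qed

end

theorem proposition2p8:
  fixes f :: "'a::euclidean_space \<Rightarrow> real" and df :: "'a \<Rightarrow> 'a"
    and h :: "'a \<Rightarrow> ereal" and L lam :: real and x0 :: 'a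
    and A tau a :: "nat \<Rightarrow> real" and x y xt yt :: "nat \<Rightarrow> 'a" and Gam :: "nat \<Rightarrow> 'a \<Rightarrow> real"
  assumes L_pos: "L > 0"
    and f_convex: "convex_on UNIV f"
    and f_smooth: "L_smooth L f df"
    and h_pcc: "proper_closed_convex h"
    and dom_h: "{u. h u \<noteq> \<infinity>} \<subseteq> UNIV"
    and lam_pos: "lam > 0"
    and acg: "ACG_run L (1 / lam) (\<lambda>u. f u + 1 / (2 * lam) * (norm (u - x0))\<^sup>2)
                (\<lambda>u. df u + (1 / lam) *\<^sub>R (u - x0)) h x0 A tau a x y xt yt Gam"
  shows "\<exists>j\<ge>1.
     real j \<le> max 1 (of_int \<lceil>min (2 * sqrt (6 * lam * L))
                                    ((1 / 2 + sqrt (lam * L)) * ln (6 * lam * L))\<rceil>) \<and>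
     (let phi = (\<lambda>u. ereal (f u) + h u);
          v = (1 / A j) *\<^sub>R (x0 - x j) + (1 / lam) *\<^sub>R (x0 - x j);
          phi_j = (\<lambda>u. Gam j u - 1 / (2 * lam) * (norm (u - x0))\<^sup>2);
          eps = real_of_ereal (phi (y j)) - phi_j (x j) - inner v (y j - x j)
      in v \<in> eps_subdiff phi eps (y j) \<and>
         (norm (lam *\<^sub>R v + y j - x0))\<^sup>2 + 2 * lam * eps \<le> 0.9 * (norm (x0 - y j))\<^sup>2)"
proof -
  interpret acg_prox_run f df h L lam x0 A tau a x y xt yt Gam
    using L_pos f_convex f_smooth h_pcc lam_pos acg by unfold_locales
  obtain J where J: "1 \<le> J"
    "real J \<le> max 1 (of_int \<lceil>min (2 * sqrt (6 * lam * L))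
                                  ((1 / 2 + sqrt (lam * L)) * ln (6 * lam * L))\<rceil>)"
    "lam / A J \<le> 0.31 \<or> (J = 1 \<and> lam / A J \<le> 1 / 2)"
    by (rule exists_iteration_with_small_lam_div_A)
  show ?thesis
    using J v_hat_eps_subdiff[OF J(1)] error_criterion[OF J(1) J(3)]
    unfolding Let_def v_hat_def eps_def phi_model_def phi_def[abs_def]
    by (intro exI[of _ J]) simp
qed

end
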